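(* The sequence $a(n)=\sum_{k=0}^{\lfloor\frac{n-1}{2}\rfloor}(-1)^k e(n-1-k,k)$, $n\ge 0$ (with $a(0)=0$ as an empty sum), is periodic with period $12$, i.e. $a(n+12)=a(n)$ for all $n\ge0$, and its first twelve values $a(0),\dots,a(11)$ are $0,1,1,1,0,0,0,0,0,-1,-1,-1$.
   Context: $e(m,k)$ is the number of $k$-element subsets of $\{1,\dots,m\}$ whose sum of elements is even (the empty set counts as even). *)

theory Defs
  imports Main
begin

definition e :: "nat \<Rightarrow> nat \<Rightarrow> nat" where
  "e m k = card {S. S \<subseteq> {1..m} \<and> card S = k \<and> even (\<Sum>S)}"

definition a :: "nat \<Rightarrow> int" where
  "a n = (if n = 0 then 0
          else (\<Sum>k = 0..(n - 1) div 2. (-1) ^ k * int (e (n - 1 - k) k)))"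

end

(* Proof idea: with d(m,k) the sum of (-1)^(sum S) over the k-subsets S of {1..m}, i.e. the
   coefficient of x^k in prod_(j=1..m) (1 + (-1)^j x), one has 2 e(m,k) = C(m,k) + d(m,k).
   Pascal's rule C(m+1,k+1) = C(m,k+1) + C(m,k) and, from (1 - x)(1 + x) = 1 - x^2, the rule
   d(m+2,k+2) = d(m,k+2) - d(m,k) turn the alternating diagonal sums
   x(n) = sum_k (-1)^k f(n-k,k) of both triangles into solutions of x(n+2s) = x(n+s) - x(n)
   (s = 1 resp. s = 2). Such sequences satisfy x(n+3s) = -x(n), hence have period 6s, and
   2 a(n+1) is the sum of the two diagonal sums. *)

theory Submission
  imports Defs
begin

definition alt_diag_sum :: "(nat \<Rightarrow> nat \<Rightarrow> 'a::comm_ring_1) \<Rightarrow> nat \<Rightarrow> 'a" where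
  "alt_diag_sum f n = (\<Sum>k\<le>n. (-1) ^ k * f (n - k) k)"

lemma alt_diag_sum_eq_sum_lessThan:
  assumes "\<And>m k. m < k \<Longrightarrow> f m k = 0" and "n < N"
  shows "alt_diag_sum f n = (\<Sum>k<N. (-1) ^ k * f (n - k) k)"
  unfolding alt_diag_sum_def using assms by (intro sum.mono_neutral_left) auto

lemma sum_lessThan_add_split:
  fixes g :: "nat \<Rightarrow> 'a::comm_monoid_add"
  shows "(\<Sum>k<s + N. g k) = (\<Sum>k<s. g k) + (\<Sum>j<N. g (j + s))"
  by (induction N) (simp_all add: add.commute add.left_commute)

lemma alt_diag_sum_recurrence:
  fixes f :: "nat \<Rightarrow> nat \<Rightarrow> 'a::comm_ring_1"
  assumes vanish: "\<And>m k. m < k \<Longrightarrow> f m k = 0"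
    and low: "\<And>m k. k < s \<Longrightarrow> f (m + s) k = f m k"
    and pascal: "\<And>m k. f (m + s) (k + s) = f m (k + s) + c * f m k"
  shows "alt_diag_sum f (n + 2 * s) = alt_diag_sum f (n + s) + (-1) ^ s * c * alt_diag_sum f n"
proof -
  define N where "N = Suc (n + s)"
  define t where "t y k = (-1) ^ k * f (y - k) k" for y k
  have diag: "alt_diag_sum f y = (\<Sum>k<s. t y k) + (\<Sum>j<N. t y (j + s))" if "y \<le> n + 2 * s" for y
  proof -
    have "y < s + N" using that by (simp add: N_def)
    then have "alt_diag_sum f y = (\<Sum>k<s + N. t y k)"
      unfolding t_def by (intro alt_diag_sum_eq_sum_lessThan vanish)
    then show ?thesis by (simp only: sum_lessThan_add_split)
  qed
  have head: "t (n + 2 * s) k = t (n + s) k" if "k < s" for k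
    using low[OF that, of "n + s - k"] that by (simp add: t_def mult_2 add.commute add.left_commute)
  have tail: "t (n + 2 * s) (j + s) = t (n + s) (j + s) + (-1) ^ s * c * t n j" for j
  proof (cases "j \<le> n")
    case True
    then have "n + 2 * s - (j + s) = (n - j) + s" "n + s - (j + s) = n - j" by simp_all
    then have "f (n + 2 * s - (j + s)) (j + s) = f (n + s - (j + s)) (j + s) + c * f (n - j) j"
      using pascal[of "n - j" j] by simp
    then show ?thesis
      by (simp add: t_def power_add algebra_simps)
  next
    case False
    then show ?thesis by (simp add: t_def vanish)
  qed
  have "n < N" by (simp add: N_def)
  then have "alt_diag_sum f n = (\<Sum>j<N. t n j)"
    unfolding t_def by (intro alt_diag_sum_eq_sum_lessThan vanish)
  then show ?thesis
    using diag[of "n + 2 * s"] diag[of "n + s"] head tail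
    by (simp add: sum.distrib sum_distrib_left)
qed

lemma periodic_of_recurrence:
  fixes x :: "nat \<Rightarrow> 'a::ab_group_add"
  assumes rec: "\<And>n. x (n + 2 * s) = x (n + s) - x n"
  shows "x (n + 6 * s) = x n"
proof -
  have antiperiodic: "x (m + 3 * s) = - x m" for m
  proof -
    have "x (m + s + 2 * s) = x (m + s + s) - x (m + s)"
      by (rule rec)
    moreover have "m + s + 2 * s = m + 3 * s" "m + s + s = m + 2 * s" by simp_all
    ultimately show ?thesis using rec[of m] by simp
  qed
  show ?thesis
    using antiperiodic[of n] antiperiodic[of "n + 3 * s"] by (simp add: algebra_simps)
qed

definition parity_excess :: "nat \<Rightarrow> nat \<Rightarrow> int" where
  "parity_excess m k = (\<Sum>S | S \<subseteq> {1..m} \<and> card S = k. (-1) ^ \<Sum>S)"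

lemma subsets_insert_card_Suc:
  assumes "finite A" and "x \<notin> A"
  shows "{S. S \<subseteq> insert x A \<and> card S = Suc k}
    = {S. S \<subseteq> A \<and> card S = Suc k} \<union> insert x ` {S. S \<subseteq> A \<and> card S = k}"
proof (intro equalityI subsetI)
  fix S assume S: "S \<in> {S. S \<subseteq> insert x A \<and> card S = Suc k}"
  then have "finite S" using assms(1) finite_subset by auto
  show "S \<in> {S. S \<subseteq> A \<and> card S = Suc k} \<union> insert x ` {S. S \<subseteq> A \<and> card S = k}"
  proof (cases "x \<in> S")
    case True
    then have "S = insert x (S - {x})" and "card (S - {x}) = k"
      using S \<open>finite S\<close> by auto
    moreover have "S - {x} \<subseteq> A" using S by auto
    ultimately show ?thesis by blast
  next
    case False
    then show ?thesis using S by auto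
  qed
next
  fix S assume "S \<in> {S. S \<subseteq> A \<and> card S = Suc k} \<union> insert x ` {S. S \<subseteq> A \<and> card S = k}"
  then show "S \<in> {S. S \<subseteq> insert x A \<and> card S = Suc k}"
  proof (elim UnE)
    assume "S \<in> insert x ` {S. S \<subseteq> A \<and> card S = k}"
    then obtain T where "S = insert x T" "T \<subseteq> A" "card T = k" by auto
    moreover have "finite T" "x \<notin> T" using \<open>T \<subseteq> A\<close> assms finite_subset by auto
    ultimately show ?thesis by auto
  qed auto
qed

lemma parity_excess_Suc_Suc:
  "parity_excess (Suc m) (Suc k) = parity_excess m (Suc k) + (-1) ^ Suc m * parity_excess m k"
proof -
  let ?sub = "\<lambda>k. {S. S \<subseteq> {1..m} \<and> card S = k}"
  have inj: "inj_on (insert (Suc m)) (?sub k)"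
  proof (rule inj_onI)
    fix S T assume "S \<in> ?sub k" "T \<in> ?sub k" "insert (Suc m) S = insert (Suc m) T"
    moreover from this have "Suc m \<notin> S" "Suc m \<notin> T" by auto
    ultimately show "S = T" by (simp add: insert_ident)
  qed
  have "{1..Suc m} = insert (Suc m) {1..m}" by auto
  then have split: "{S. S \<subseteq> {1..Suc m} \<and> card S = Suc k} = ?sub (Suc k) \<union> insert (Suc m) ` ?sub k"
    by (simp add: subsets_insert_card_Suc)
  have sign: "(-1) ^ \<Sum>(insert (Suc m) T) = (-1) ^ Suc m * (-1 :: int) ^ \<Sum>T" if "T \<in> ?sub k" for T
  proof -
    have "finite T" and "Suc m \<notin> T" using that by (auto dest: finite_subset)
    then show ?thesis by (simp add: power_add)
  qed
  have "(\<Sum>S \<in> insert (Suc m) ` ?sub k. (-1 :: int) ^ \<Sum>S)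
      = (\<Sum>T \<in> ?sub k. (-1) ^ Suc m * (-1) ^ \<Sum>T)"
    using sign by (intro sum.reindex_cong[OF inj refl]) simp
  then have "(\<Sum>S \<in> insert (Suc m) ` ?sub k. (-1 :: int) ^ \<Sum>S) = (-1) ^ Suc m * parity_excess m k"
    by (simp add: parity_excess_def sum_distrib_left del: power_Suc)
  moreover have "?sub (Suc k) \<inter> insert (Suc m) ` ?sub k = {}" by auto
  ultimately show ?thesis
    unfolding parity_excess_def split by (subst sum.union_disjoint) auto
qed

lemma parity_excess_0_right [simp]: "parity_excess m 0 = 1"
proof -
  have "{S. S \<subseteq> {1..m} \<and> card S = 0} = {{}}"
    by (auto simp: card_eq_0_iff dest: finite_subset)
  then show ?thesis by (simp add: parity_excess_def)
qed

lemma parity_excess_eq_0: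
  assumes "m < k"
  shows "parity_excess m k = 0"
proof -
  have "card S \<le> m" if "S \<subseteq> {1..m}" for S
    using card_mono[OF finite_atLeastAtMost that] by simp
  then have "{S. S \<subseteq> {1..m} \<and> card S = k} = {}"
    using assms leD by blast
  then show ?thesis unfolding parity_excess_def by (simp only: sum.empty)
qed

lemma parity_excess_0_Suc [simp]: "parity_excess 0 (Suc k) = 0"
  by (simp add: parity_excess_eq_0)

lemma e_eq_binomial_plus_parity_excess:
  "2 * int (e m k) = int (m choose k) + parity_excess m k"
proof -
  define X where "X = {S. S \<subseteq> {1..m} \<and> card S = k}"
  have "finite X" unfolding X_def by (rule finite_subset[of _ "Pow {1..m}"]) auto
  have e_X: "e m k = card (X \<inter> {S. even (\<Sum>S)})"
    by (simp add: e_def X_def Int_def conj_assoc)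
  have "card X = card (X \<inter> {S. even (\<Sum>S)}) + card (X \<inter> - {S. even (\<Sum>S)})"
    using \<open>finite X\<close> by (metis Diff_eq card_Int_Diff)
  moreover have "card X = m choose k"
    unfolding X_def by (simp add: n_subsets)
  moreover have "parity_excess m k
      = int (card (X \<inter> {S. even (\<Sum>S)})) - int (card (X \<inter> - {S. even (\<Sum>S)}))"
    unfolding parity_excess_def X_def[symmetric]
    by (simp add: minus_one_power_iff sum.If_cases[OF \<open>finite X\<close>])
  ultimately show ?thesis by (simp add: e_X)
qed

lemma parity_excess_Suc2_Suc2:
  "parity_excess (Suc (Suc m)) (Suc (Suc k)) = parity_excess m (Suc (Suc k)) - parity_excess m k"
  by (simp only: parity_excess_Suc_Suc) (simp add: algebra_simps)

lemma parity_excess_Suc2_1: "parity_excess (Suc (Suc m)) 1 = parity_excess m 1"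
  by (simp only: One_nat_def parity_excess_Suc_Suc) simp

lemma alt_diag_sum_binomial_recurrence:
  "alt_diag_sum (\<lambda>m k. int (m choose k)) (n + 2) = alt_diag_sum (\<lambda>m k. int (m choose k)) (n + 1)
    - alt_diag_sum (\<lambda>m k. int (m choose k)) n"
proof -
  have "alt_diag_sum (\<lambda>m k. int (m choose k)) (n + 2 * 1) = alt_diag_sum (\<lambda>m k. int (m choose k)) (n + 1)
      + (-1) ^ 1 * 1 * alt_diag_sum (\<lambda>m k. int (m choose k)) n"
    by (rule alt_diag_sum_recurrence) simp_all
  then show ?thesis by simp
qed

lemma alt_diag_sum_parity_excess_recurrence:
  "alt_diag_sum parity_excess (n + 4) = alt_diag_sum parity_excess (n + 2) - alt_diag_sum parity_excess n"
proof -
  have "alt_diag_sum parity_excess (n + 2 * 2)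
      = alt_diag_sum parity_excess (n + 2) + (-1) ^ 2 * (-1) * alt_diag_sum parity_excess n"
  proof (rule alt_diag_sum_recurrence)
    show "parity_excess m k = 0" if "m < k" for m k
      using that by (rule parity_excess_eq_0)
    show "parity_excess (m + 2) k = parity_excess m k" if "k < 2" for m k
      using that parity_excess_Suc2_1[of m] by (auto simp: less_2_cases_iff)
    show "parity_excess (m + 2) (k + 2) = parity_excess m (k + 2) + -1 * parity_excess m k" for m k
      using parity_excess_Suc2_Suc2[of m k] by simp
  qed
  then show ?thesis by simp
qed

lemma e_eq_0: "m < k \<Longrightarrow> e m k = 0"
  using e_eq_binomial_plus_parity_excess[of m k] by (simp add: parity_excess_eq_0 binomial_eq_0)

lemma two_a_Suc:
  "2 * a (Suc n) = alt_diag_sum (\<lambda>m k. int (m choose k)) n + alt_diag_sum parity_excess n"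
proof -
  have "e (n - k) k = 0" if "k \<in> {..n} - {..n div 2}" for k
    using that by (intro e_eq_0) auto
  then have "a (Suc n) = (\<Sum>k\<le>n. (-1) ^ k * int (e (n - k) k))"
    unfolding a_def atLeast0AtMost by (simp, intro sum.mono_neutral_left) auto
  then have "2 * a (Suc n) = (\<Sum>k\<le>n. (-1) ^ k * (2 * int (e (n - k) k)))"
    by (simp add: sum_distrib_left algebra_simps)
  then show ?thesis
    by (simp add: e_eq_binomial_plus_parity_excess alt_diag_sum_def algebra_simps sum.distrib)
qed

lemma a_Suc:
  "a (Suc n) = (alt_diag_sum (\<lambda>m k. int (m choose k)) n + alt_diag_sum parity_excess n) div 2"
  using two_a_Suc[of n] by simp

lemma a_initial_values:
  shows "map a [0..<12] = [0, 1, 1, 1, 0, 0, 0, 0, 0, -1, -1, -1]" and "a 12 = 0"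
proof -
  have "a 0 = 0" by (simp add: a_def)
  then show "map a [0..<12] = [0, 1, 1, 1, 0, 0, 0, 0, 0, -1, -1, -1]" and "a 12 = 0"
    by (simp_all add: upt_rec a_Suc alt_diag_sum_def parity_excess_Suc_Suc numeral_eq_Suc)
qed

lemma a_Suc_periodic: "a (Suc n + 12) = a (Suc n)"
proof -
  have binomial_6: "alt_diag_sum (\<lambda>m k. int (m choose k)) (n + 6 * 1) = alt_diag_sum (\<lambda>m k. int (m choose k)) n"
    for n using alt_diag_sum_binomial_recurrence by (intro periodic_of_recurrence) simp
  have binomial: "alt_diag_sum (\<lambda>m k. int (m choose k)) (n + 12) = alt_diag_sum (\<lambda>m k. int (m choose k)) n"
    using binomial_6[of "n + 6"] binomial_6[of n] by (simp add: add.assoc)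
  have parity: "alt_diag_sum parity_excess (n + 6 * 2) = alt_diag_sum parity_excess n"
    using alt_diag_sum_parity_excess_recurrence by (intro periodic_of_recurrence) simp
  show ?thesis
    using binomial parity a_Suc[of "n + 12"] a_Suc[of n] by simp
qed

theorem proposition4p4:
  shows "(\<forall>n. a (n + 12) = a n) \<and>
         map a [0..<12] = [0, 1, 1, 1, 0, 0, 0, 0, 0, -1, -1, -1]"
proof
  show "\<forall>n. a (n + 12) = a n"
  proof
    fix n
    show "a (n + 12) = a n"
    proof (cases n)
      case 0
      then show ?thesis using a_initial_values(2) by (simp add: a_def)
    next
      case (Suc m)
      then show ?thesis using a_Suc_periodic[of m] by simp
    qed
  qed
qed (rule a_initial_values(1))

end
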